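(* Let $G$ be a finitely generated free abelian group and $N$ a $\mathbb{Z}[G]$-module admitting two injective presentations $0\to\mathbb{Z}[G]^a\xrightarrow{P}\mathbb{Z}[G]^b\xrightarrow{\pi}N\to0$ and $0\to\mathbb{Z}[G]^{a'}\xrightarrow{P'}\mathbb{Z}[G]^{b'}\xrightarrow{\pi'}N\to0$ with $b-a=b'-a'=d$. For $u_1,\dots,u_d\in N$ set $\mathcal{A}_P(u_1\wedge\cdots\wedge u_d)=\det[P\,|\,\bar u_1\cdots\bar u_d]\in\mathbb{Z}[G]$ with $\pi(\bar u_j)=u_j$, and similarly $\mathcal{A}_{P'}$. Then $\mathcal{A}_P$ does not depend on the lifts $\bar u_j$, and there is a single element $\epsilon g\in\pm G\subset\mathbb{Z}[G]$ with $\mathcal{A}_{P'}=\epsilon g\cdot\mathcal{A}_P$ on all of $\wedge^d_{\mathbb{Z}[G]}N$. In particular, for a connected sutured cobordism $(Y,\Gamma)$ with $H_2(\overline Y,\overline R^+)=0$, the $\mathbb{Z}[G]$-valued Alexander function on $\wedge^d_{\mathbb{Z}[G]}H_1(\overline Y,\overline R^+)$, $d=-\chi(Y,R^+)$, depends up to global multiplication by $\pm G$ only on the module $H_1(\overline Y,\overline R^+)$ and $d$.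
   Context: For a connected sutured cobordism $(Y,\Gamma)$ (compact oriented 3-manifold whose boundary contains the incoming/outgoing surfaces and regions $R^+,R^-$), $G=H_1(Y)/\mathrm{tors}(H_1(Y))$, $p\colon\overline Y\to Y$ is the maximal free abelian cover (deck group $G$), $\overline R^+=p^{-1}(R^+)$, and $H_1(\overline Y,\overline R^+)$ is a $\mathbb{Z}[G]$-module; when $H_2(\overline Y,\overline R^+)=0$ it admits an injective presentation matrix of deficiency $d$ (coming from a relative CW structure with $a$ 2-cells and $b$ 1-cells, $b-a=d$), and the Alexander function $\mathcal{A}^{\mathbb{Z}[G]}_{Y,\Gamma}$ is $\mathcal{A}_P$ for such $P$ (and $0$ if $H_2(\overline Y,\overline R^+)\neq0$). An injective presentation of deficiency $d$ is an exact sequence as in the claim with $b-a=d$. *)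

theory Defs
  imports "HOL-Library.Poly_Mapping" "Jordan_Normal_Form.Determinant"
begin

text \<open>The group ring Z[G] of the free abelian group G = Z^n, where n = CARD('n):
  finitely supported functions G -> int with convolution product.\<close>
type_synonym 'n grpring = "(('n \<Rightarrow>\<^sub>0 int) \<Rightarrow>\<^sub>0 int)"

text \<open>An injective presentation 0 -> R^a --P--> R^b --pi--> N -> 0 of the R-module N
  (scalar multiplication sN), with P a b x a matrix acting on column vectors.\<close>
definition injective_presentation ::
  "('r::comm_ring_1 \<Rightarrow> 'm::ab_group_add \<Rightarrow> 'm) \<Rightarrow> 'r mat \<Rightarrow> nat \<Rightarrow> nat \<Rightarrow> ('r vec \<Rightarrow> 'm) \<Rightarrow> bool"
  where "injective_presentation sN P a b \<pi> \<longleftrightarrow>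
     P \<in> carrier_mat b a \<and>
     (\<forall>v \<in> carrier_vec a. P *\<^sub>v v = 0\<^sub>v b \<longrightarrow> v = 0\<^sub>v a) \<and>
     (\<forall>v \<in> carrier_vec b. \<forall>w \<in> carrier_vec b. \<pi> (v + w) = \<pi> v + \<pi> w) \<and>
     (\<forall>r. \<forall>v \<in> carrier_vec b. \<pi> (r \<cdot>\<^sub>v v) = sN r (\<pi> v)) \<and>
     \<pi> ` carrier_vec b = UNIV \<and>
     {v \<in> carrier_vec b. \<pi> v = 0} = (\<lambda>x. P *\<^sub>v x) ` carrier_vec a"

definition is_lift :: "('r vec \<Rightarrow> 'm) \<Rightarrow> nat \<Rightarrow> nat \<Rightarrow> (nat \<Rightarrow> 'm) \<Rightarrow> (nat \<Rightarrow> 'r vec) \<Rightarrow> bool"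
  where "is_lift \<pi> b d u ubar \<longleftrightarrow> (\<forall>j<d. ubar j \<in> carrier_vec b \<and> \<pi> (ubar j) = u j)"

definition det_augmented :: "'r::comm_ring_1 mat \<Rightarrow> nat \<Rightarrow> nat \<Rightarrow> (nat \<Rightarrow> 'r vec) \<Rightarrow> 'r"
  where "det_augmented P a b ubar =
     det (mat b b (\<lambda>(i, j). if j < a then P $$ (i, j) else ubar (j - a) $ i))"

definition alexander_fun ::
  "'r::comm_ring_1 mat \<Rightarrow> ('r vec \<Rightarrow> 'm) \<Rightarrow> nat \<Rightarrow> nat \<Rightarrow> nat \<Rightarrow> (nat \<Rightarrow> 'm) \<Rightarrow> 'r"
  where "alexander_fun P \<pi> a b d u = det_augmented P a b (SOME ubar. is_lift \<pi> b d u ubar)"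

end

theory Submission
  imports Defs
begin

text \<open>
  Two lifts of the same u_j differ by an element of the image of P, so changing lifts
  multiplies the augmented matrix on the right by a block unitriangular matrix and does not
  change the determinant.

  To compare two presentations, stabilize both by identity blocks to the same size. Lifting
  the identity of N gives matrices A, B with pi A = pi' and pi' B = pi, and Whitehead's
  exchange matrix built from A and B is an invertible change of coordinates turning one
  stabilized presentation matrix into a presentation of the same kernel as the other.
  Two injective presentations of one kernel differ by an invertible matrix X on the right,
  so the Alexander functions differ by the unit det X. Finally, G embeds into a linearly
  ordered group, and comparing extremal terms of a unit and its inverse shows that the
  units of Z[G] are exactly the elements +-g.
\<close>

section \<open>Units of the group ring\<close>

lemma lookup_mult_at_max_keys:
  fixes \<kappa> :: "'k::comm_monoid_add \<Rightarrow> 'L::linordered_ab_group_add"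
    and p q :: "'k \<Rightarrow>\<^sub>0 'b::ring"
  assumes additive: "\<And>x y. \<kappa> (x + y) = \<kappa> x + \<kappa> y" and "inj \<kappa>"
    and p_max: "\<And>x. x \<in> Poly_Mapping.keys p \<Longrightarrow> \<kappa> x \<le> \<kappa> x\<^sub>p"
    and q_max: "\<And>y. y \<in> Poly_Mapping.keys q \<Longrightarrow> \<kappa> y \<le> \<kappa> y\<^sub>q"
  shows "Poly_Mapping.lookup (p * q) (x\<^sub>p + y\<^sub>q) = Poly_Mapping.lookup p x\<^sub>p * Poly_Mapping.lookup q y\<^sub>q"
proof -
  have vanish: "Poly_Mapping.lookup (f * g) (x\<^sub>p + y\<^sub>q) = 0"
    if "\<And>x y. x \<in> Poly_Mapping.keys f \<Longrightarrow> y \<in> Poly_Mapping.keys g \<Longrightarrow> \<kappa> x + \<kappa> y < \<kappa> x\<^sub>p + \<kappa> y\<^sub>q"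
    for f g :: "'k \<Rightarrow>\<^sub>0 'b"
  proof (rule ccontr)
    assume "Poly_Mapping.lookup (f * g) (x\<^sub>p + y\<^sub>q) \<noteq> 0"
    then obtain x y where "x \<in> Poly_Mapping.keys f" "y \<in> Poly_Mapping.keys g" "x\<^sub>p + y\<^sub>q = x + y"
      using keys_mult[of f g] by (auto simp: in_keys_iff)
    with that[of x y] show False by (simp add: additive[symmetric])
  qed
  define s where "s = Poly_Mapping.single x\<^sub>p (Poly_Mapping.lookup p x\<^sub>p)"
  define t where "t = Poly_Mapping.single y\<^sub>q (Poly_Mapping.lookup q y\<^sub>q)"
  have strict: "\<kappa> x < \<kappa> z" if "\<kappa> x \<le> \<kappa> z" "x \<noteq> z" for x z
    using that \<open>inj \<kappa>\<close> by (metis injD order_le_neq_trans)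
  have "Poly_Mapping.lookup (s * (q - t)) (x\<^sub>p + y\<^sub>q) = 0"
    by (rule vanish) (auto simp: s_def t_def in_keys_iff lookup_minus lookup_single when_def
        split: if_splits intro!: add_strict_left_mono strict q_max)
  moreover have "Poly_Mapping.lookup ((p - s) * q) (x\<^sub>p + y\<^sub>q) = 0"
    by (rule vanish) (auto simp: s_def in_keys_iff lookup_minus lookup_single when_def
        split: if_splits intro!: add_less_le_mono strict p_max q_max)
  moreover have "p * q = s * t + s * (q - t) + (p - s) * q"
    by (simp add: algebra_simps)
  ultimately show ?thesis by (simp add: lookup_add s_def t_def mult_single)
qed

lemma mult_eq_one_at_max_keys:
  fixes \<kappa> :: "'k::comm_monoid_add \<Rightarrow> 'L::linordered_ab_group_add"
    and c e :: "'k \<Rightarrow>\<^sub>0 int"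
  assumes "\<And>x y. \<kappa> (x + y) = \<kappa> x + \<kappa> y" and "inj \<kappa>" and "c * e = 1"
    and "x\<^sub>c \<in> Poly_Mapping.keys c" "\<And>x. x \<in> Poly_Mapping.keys c \<Longrightarrow> \<kappa> x \<le> \<kappa> x\<^sub>c"
    and "y\<^sub>e \<in> Poly_Mapping.keys e" "\<And>y. y \<in> Poly_Mapping.keys e \<Longrightarrow> \<kappa> y \<le> \<kappa> y\<^sub>e"
  shows "x\<^sub>c + y\<^sub>e = 0" and "Poly_Mapping.lookup c x\<^sub>c * Poly_Mapping.lookup e y\<^sub>e = 1"
proof -
  have top: "Poly_Mapping.lookup 1 (x\<^sub>c + y\<^sub>e) = Poly_Mapping.lookup c x\<^sub>c * Poly_Mapping.lookup e y\<^sub>e"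
    using lookup_mult_at_max_keys[where p = c and q = e, OF assms(1,2,5,7)] assms(3) by simp
  moreover have "Poly_Mapping.lookup c x\<^sub>c * Poly_Mapping.lookup e y\<^sub>e \<noteq> 0"
    using assms(4,6) by (simp add: in_keys_iff)
  ultimately show "x\<^sub>c + y\<^sub>e = 0"
    by (auto simp: lookup_one when_def split: if_splits)
  with top show "Poly_Mapping.lookup c x\<^sub>c * Poly_Mapping.lookup e y\<^sub>e = 1" by simp
qed

lemma is_unit_poly_mapping_eq_single:
  fixes \<kappa> :: "'k::comm_monoid_add \<Rightarrow> 'L::linordered_ab_group_add"
    and c :: "'k \<Rightarrow>\<^sub>0 int"
  assumes additive: "\<And>x y. \<kappa> (x + y) = \<kappa> x + \<kappa> y" and "inj \<kappa>" and "c dvd 1"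
  shows "\<exists>g \<epsilon>. (\<epsilon> = 1 \<or> \<epsilon> = -1) \<and> c = Poly_Mapping.single g \<epsilon>"
proof -
  obtain e where ce: "c * e = 1" using \<open>c dvd 1\<close> by (metis dvdE)
  have ex_max: "\<exists>x\<in>Poly_Mapping.keys p. \<forall>y\<in>Poly_Mapping.keys p. \<phi> y \<le> \<phi> x"
    if "p \<noteq> 0" for p :: "'k \<Rightarrow>\<^sub>0 int" and \<phi> :: "'k \<Rightarrow> 'L"
  proof -
    have "Max (\<phi> ` Poly_Mapping.keys p) \<in> \<phi> ` Poly_Mapping.keys p"
      using that by simp
    then show ?thesis by (metis Max_ge finite_imageI finite_keys imageE image_eqI)
  qed
  have "c \<noteq> 0" "e \<noteq> 0" using ce by auto
  obtain x\<^sub>M y\<^sub>M where max: "x\<^sub>M \<in> Poly_Mapping.keys c" "\<And>x. x \<in> Poly_Mapping.keys c \<Longrightarrow> \<kappa> x \<le> \<kappa> x\<^sub>M"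
      "y\<^sub>M \<in> Poly_Mapping.keys e" "\<And>y. y \<in> Poly_Mapping.keys e \<Longrightarrow> \<kappa> y \<le> \<kappa> y\<^sub>M"
    using ex_max[OF \<open>c \<noteq> 0\<close>, of \<kappa>] ex_max[OF \<open>e \<noteq> 0\<close>, of \<kappa>] by blast
  obtain x\<^sub>m y\<^sub>m where min: "x\<^sub>m \<in> Poly_Mapping.keys c" "\<And>x. x \<in> Poly_Mapping.keys c \<Longrightarrow> - \<kappa> x \<le> - \<kappa> x\<^sub>m"
      "y\<^sub>m \<in> Poly_Mapping.keys e" "\<And>y. y \<in> Poly_Mapping.keys e \<Longrightarrow> - \<kappa> y \<le> - \<kappa> y\<^sub>m"
    using ex_max[OF \<open>c \<noteq> 0\<close>, of "\<lambda>x. - \<kappa> x"] ex_max[OF \<open>e \<noteq> 0\<close>, of "\<lambda>x. - \<kappa> x"] by blast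
  have "\<And>x y. - \<kappa> (x + y) = - \<kappa> x + - \<kappa> y" and "inj (\<lambda>x. - \<kappa> x)"
    using additive \<open>inj \<kappa>\<close> by (simp_all add: inj_def)
  note top = mult_eq_one_at_max_keys[OF additive \<open>inj \<kappa>\<close> ce max]
    and bottom = mult_eq_one_at_max_keys[of "\<lambda>x. - \<kappa> x", OF this ce min]
  have sums: "\<kappa> x\<^sub>m + \<kappa> y\<^sub>m = \<kappa> x\<^sub>M + \<kappa> y\<^sub>M"
    using top(1) bottom(1) additive[of x\<^sub>m y\<^sub>m] additive[of x\<^sub>M y\<^sub>M] by simp
  have "\<kappa> x\<^sub>M = \<kappa> x\<^sub>m"
  proof (rule ccontr)
    assume "\<kappa> x\<^sub>M \<noteq> \<kappa> x\<^sub>m"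
    with max(2)[OF min(1)] have "\<kappa> x\<^sub>m < \<kappa> x\<^sub>M" by simp
    then have "\<kappa> x\<^sub>m + \<kappa> y\<^sub>m < \<kappa> x\<^sub>M + \<kappa> y\<^sub>M"
      using max(4)[OF min(3)] by (rule add_less_le_mono)
    with sums show False by simp
  qed
  then have "Poly_Mapping.keys c = {x\<^sub>M}"
    using max(1,2) min(2) \<open>inj \<kappa>\<close> by (force dest: injD intro: order.antisym)
  then have "c = Poly_Mapping.single x\<^sub>M (Poly_Mapping.lookup c x\<^sub>M)"
    by (metis in_keys_iff lookup_single_eq lookup_single_not_eq poly_mapping_eqI singletonD)
  moreover have "Poly_Mapping.lookup c x\<^sub>M = 1 \<or> Poly_Mapping.lookup c x\<^sub>M = -1"
    using top(2) zmult_eq_1_iff by blast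
  ultimately show ?thesis by blast
qed

lemma is_unit_grpring_eq_single:
  fixes c :: "'n::finite grpring"
  assumes "c dvd 1"
  shows "\<exists>g \<epsilon>. (\<epsilon> = 1 \<or> \<epsilon> = -1) \<and> c = Poly_Mapping.single g \<epsilon>"
proof -
  obtain f :: "'n \<Rightarrow> nat" where "inj f"
    using finite_imp_inj_to_nat_seg[of "UNIV :: 'n set"] by auto
  \<comment> \<open>\<open>nat \<Rightarrow>\<^sub>0 int\<close> is linearly ordered (lexicographically) as a group\<close>
  define \<kappa> :: "('n \<Rightarrow>\<^sub>0 int) \<Rightarrow> nat \<Rightarrow>\<^sub>0 int"
    where "\<kappa> g = (\<Sum>x\<in>UNIV. Poly_Mapping.single (f x) (Poly_Mapping.lookup g x))" for g
  have lookup_\<kappa>: "Poly_Mapping.lookup (\<kappa> g) (f x) = Poly_Mapping.lookup g x" for g x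
    using \<open>inj f\<close> by (simp add: \<kappa>_def lookup_sum lookup_single when_def inj_eq)
  have "\<kappa> (g + h) = \<kappa> g + \<kappa> h" for g h
    by (simp add: \<kappa>_def lookup_add single_add sum.distrib)
  moreover have "inj \<kappa>"
    by (intro injI poly_mapping_eqI) (metis lookup_\<kappa>)
  ultimately show ?thesis
    using is_unit_poly_mapping_eq_single assms by blast
qed

section \<open>Determinants of block matrices\<close>

lemma det_four_block_mat_one_lower_left_zero:
  fixes D :: "'r::comm_ring_1 mat"
  assumes "B \<in> carrier_mat c n" and D: "D \<in> carrier_mat n n"
  shows "det (four_block_mat (1\<^sub>m c) B (0\<^sub>m n c) D) = det D"
  using assms(1)
proof (induction c arbitrary: B)
  case 0
  then have "four_block_mat (1\<^sub>m 0) B (0\<^sub>m n 0) D = D"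
    using D by (intro eq_matI) auto
  then show ?case by simp
next
  case (Suc c)
  define B' where "B' = mat c n (\<lambda>(i, j). B $$ (Suc i, j))"
  define r where "r = mat 1 (c + n) (\<lambda>(i, j). if j < c then 0 else B $$ (0, j - c))"
  have B': "B' \<in> carrier_mat c n" by (simp add: B'_def)
  have "four_block_mat (1\<^sub>m (Suc c)) B (0\<^sub>m n (Suc c)) D
      = four_block_mat (1\<^sub>m 1) r (0\<^sub>m (c + n) 1) (four_block_mat (1\<^sub>m c) B' (0\<^sub>m n c) D)"
    using Suc.prems D by (intro eq_matI) (auto simp: B'_def r_def)
  also have "det \<dots> = det (1\<^sub>m 1 :: 'r mat) * det (four_block_mat (1\<^sub>m c) B' (0\<^sub>m n c) D)"
    by (rule det_four_block_mat_lower_left_zero_col) (use B' D in \<open>auto simp: r_def\<close>)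
  finally show ?case using Suc.IH[OF B'] by simp
qed

lemma det_four_block_mat_upper_right_zero_one:
  fixes A :: "'r::comm_ring_1 mat"
  assumes A: "A \<in> carrier_mat n n" and "C \<in> carrier_mat d n"
  shows "det (four_block_mat A (0\<^sub>m n d) C (1\<^sub>m d)) = det A"
  using assms(2)
proof (induction d arbitrary: C)
  case 0
  then have "four_block_mat A (0\<^sub>m n 0) C (1\<^sub>m 0) = A"
    using A by (intro eq_matI) auto
  then show ?case by simp
next
  case (Suc d)
  define C' where "C' = mat d n (\<lambda>(i, j). C $$ (i, j))"
  define r where "r = mat 1 (n + d) (\<lambda>(i, j). if j < n then C $$ (d, j) else 0)"
  have C': "C' \<in> carrier_mat d n" by (simp add: C'_def)
  have "four_block_mat A (0\<^sub>m n (Suc d)) C (1\<^sub>m (Suc d))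
      = four_block_mat (four_block_mat A (0\<^sub>m n d) C' (1\<^sub>m d)) (0\<^sub>m (n + d) 1) r (1\<^sub>m 1)"
    using Suc.prems A by (intro eq_matI) (auto simp: C'_def r_def, metis add_diff_cancel_left' less_Suc_eq)
  also have "det \<dots> = det (four_block_mat A (0\<^sub>m n d) C' (1\<^sub>m d)) * det (1\<^sub>m 1 :: 'r mat)"
    by (rule det_four_block_mat_upper_right_zero_col) (use A C' in \<open>auto simp: r_def\<close>)
  finally show ?case using Suc.IH[OF C'] by simp
qed

lemma det_four_block_mat_lower_left_zero_one:
  fixes A :: "'r::comm_ring_1 mat"
  assumes A: "A \<in> carrier_mat n n" and B: "B \<in> carrier_mat n d"
  shows "det (four_block_mat A B (0\<^sub>m d n) (1\<^sub>m d)) = det A"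
proof -
  have "det (four_block_mat A B (0\<^sub>m d n) (1\<^sub>m d))
      = det (four_block_mat A B (0\<^sub>m d n) (1\<^sub>m d))\<^sup>T"
    using A B by (intro det_transpose[symmetric]) auto
  also have "\<dots> = det (four_block_mat A\<^sup>T (0\<^sub>m n d) B\<^sup>T (1\<^sub>m d))"
    using A B by (subst transpose_four_block_mat) auto
  also have "\<dots> = det A"
    using A B by (simp add: det_four_block_mat_upper_right_zero_one det_transpose)
  finally show ?thesis .
qed

section \<open>Kernel presentations and augmented matrices\<close>

definition kernel_presentation ::
    "('r::comm_ring_1 vec \<Rightarrow> 'm::ab_group_add) \<Rightarrow> 'r mat \<Rightarrow> nat \<Rightarrow> nat \<Rightarrow> bool"
  where "kernel_presentation \<rho> Q k m \<longleftrightarrow> Q \<in> carrier_mat m k \<and>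
     (\<forall>v \<in> carrier_vec k. Q *\<^sub>v v = 0\<^sub>v m \<longrightarrow> v = 0\<^sub>v k) \<and>
     (\<forall>v \<in> carrier_vec m. \<forall>w \<in> carrier_vec m. \<rho> (v + w) = \<rho> v + \<rho> w) \<and>
     {v \<in> carrier_vec m. \<rho> v = 0} = (\<lambda>x. Q *\<^sub>v x) ` carrier_vec k"

lemma kernel_presentationD:
  assumes "kernel_presentation \<rho> Q k m"
  shows "Q \<in> carrier_mat m k"
    and "\<And>v. v \<in> carrier_vec k \<Longrightarrow> Q *\<^sub>v v = 0\<^sub>v m \<Longrightarrow> v = 0\<^sub>v k"
    and "\<And>v w. v \<in> carrier_vec m \<Longrightarrow> w \<in> carrier_vec m \<Longrightarrow> \<rho> (v + w) = \<rho> v + \<rho> w"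
    and "\<And>v. v \<in> carrier_vec m \<Longrightarrow> \<rho> v = 0 \<Longrightarrow> \<exists>x\<in>carrier_vec k. v = Q *\<^sub>v x"
    and "\<And>x. x \<in> carrier_vec k \<Longrightarrow> \<rho> (Q *\<^sub>v x) = 0"
  using assms unfolding kernel_presentation_def by blast+

lemma kernel_presentation_same_valueE:
  assumes pres: "kernel_presentation \<rho> Q k m"
    and v: "v \<in> carrier_vec m" and w: "w \<in> carrier_vec m" and "\<rho> v = \<rho> w"
  obtains x where "x \<in> carrier_vec k" and "w = Q *\<^sub>v x + v"
proof -
  have w_split: "w = (w - v) + v" using v w by auto
  then have "\<rho> w = \<rho> (w - v) + \<rho> v"
    using kernel_presentationD(3)[OF pres, of "w - v" v] v w by simp
  then have "\<rho> (w - v) = 0" using \<open>\<rho> v = \<rho> w\<close> by simp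
  then obtain x where "x \<in> carrier_vec k" "w - v = Q *\<^sub>v x"
    using kernel_presentationD(4)[OF pres, of "w - v"] v w by auto
  with w_split show ?thesis using that by metis
qed

definition augment_mat :: "nat \<Rightarrow> nat \<Rightarrow> 'a mat \<Rightarrow> (nat \<Rightarrow> 'a vec) \<Rightarrow> 'a mat"
  where "augment_mat k m Q W = mat m m (\<lambda>(i, j). if j < k then Q $$ (i, j) else W (j - k) $ i)"

lemma det_augmented_eq_det_augment_mat: "det_augmented P a b U = det (augment_mat a b P U)"
  unfolding det_augmented_def augment_mat_def ..

lemma dim_augment_mat [simp]:
  "dim_row (augment_mat k m Q W) = m" "dim_col (augment_mat k m Q W) = m"
  by (simp_all add: augment_mat_def)

lemma augment_mat_carrier [simp]: "augment_mat k m Q W \<in> carrier_mat m m"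
  by (simp add: carrier_matI)

lemma augment_mat_cong:
  "(\<And>j. j < m - k \<Longrightarrow> W j = W' j) \<Longrightarrow> augment_mat k m Q W = augment_mat k m Q W'"
  by (intro eq_matI) (auto simp: augment_mat_def)

lemma mult_augment_mat:
  fixes S :: "'r::comm_ring_1 mat"
  assumes S: "S \<in> carrier_mat m m" and Q: "Q \<in> carrier_mat m k"
    and W: "\<And>j. j < m - k \<Longrightarrow> W j \<in> carrier_vec m"
  shows "S * augment_mat k m Q W = augment_mat k m (S * Q) (\<lambda>j. S *\<^sub>v W j)"
proof (rule eq_matI)
  fix i j assume "i < dim_row (augment_mat k m (S * Q) (\<lambda>j. S *\<^sub>v W j))"
    and "j < dim_col (augment_mat k m (S * Q) (\<lambda>j. S *\<^sub>v W j))"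
  then have i: "i < m" and j: "j < m" by (auto simp: augment_mat_def)
  then have "\<not> j < k \<Longrightarrow> W (j - k) \<in> carrier_vec m" by (intro W) arith
  then have "col (augment_mat k m Q W) j = (if j < k then col Q j else W (j - k))"
    using Q j by (intro eq_vecI) (auto simp: augment_mat_def)
  then show "(S * augment_mat k m Q W) $$ (i, j) = augment_mat k m (S * Q) (\<lambda>j. S *\<^sub>v W j) $$ (i, j)"
    using S Q i j by (simp add: augment_mat_def)
qed (use S in auto)

lemma augment_mat_mult_four_block_mat:
  fixes Q :: "'r::comm_ring_1 mat"
  assumes Q: "Q \<in> carrier_mat m k" and X: "X \<in> carrier_mat k k" and Z: "Z \<in> carrier_mat k (m - k)"
    and W: "\<And>j. j < m - k \<Longrightarrow> W j \<in> carrier_vec m" and "k \<le> m"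
  shows "augment_mat k m Q W * four_block_mat X Z (0\<^sub>m (m - k) k) (1\<^sub>m (m - k))
       = augment_mat k m (Q * X) (\<lambda>j. Q *\<^sub>v col Z j + W j)"
proof -
  \<comment> \<open>view \<open>[Q | W]\<close> as a block matrix whose lower blocks have no rows\<close>
  define V where "V = mat m (m - k) (\<lambda>(i, j). W j $ i)"
  have V: "V \<in> carrier_mat m (m - k)" by (simp add: V_def)
  have "augment_mat k m Q W = four_block_mat Q V (0\<^sub>m 0 k) (0\<^sub>m 0 (m - k))"
    using Q \<open>k \<le> m\<close> by (intro eq_matI) (auto simp: augment_mat_def V_def)
  also have "\<dots> * four_block_mat X Z (0\<^sub>m (m - k) k) (1\<^sub>m (m - k))
      = four_block_mat (Q * X + V * 0\<^sub>m (m - k) k) (Q * Z + V * 1\<^sub>m (m - k))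
          (0\<^sub>m 0 k * X + 0\<^sub>m 0 (m - k) * 0\<^sub>m (m - k) k) (0\<^sub>m 0 k * Z + 0\<^sub>m 0 (m - k) * 1\<^sub>m (m - k))"
    using Q X Z V by (intro mult_four_block_mat) auto
  also have "\<dots> = four_block_mat (Q * X) (Q * Z + V) (0\<^sub>m 0 k) (0\<^sub>m 0 (m - k))"
    using Q X Z V by (simp add: right_mult_one_mat[OF V])
  also have "\<dots> = augment_mat k m (Q * X) (\<lambda>j. Q *\<^sub>v col Z j + W j)"
  proof (rule eq_matI)
    fix i j assume "i < dim_row (augment_mat k m (Q * X) (\<lambda>j. Q *\<^sub>v col Z j + W j))"
      and "j < dim_col (augment_mat k m (Q * X) (\<lambda>j. Q *\<^sub>v col Z j + W j))"
    then have "i < m" "j < m" by (auto simp: augment_mat_def)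
    then have "\<not> j < k \<Longrightarrow> W (j - k) \<in> carrier_vec m" by (intro W) arith
    with Q X Z V \<open>i < m\<close> \<open>j < m\<close> \<open>k \<le> m\<close>
    show "four_block_mat (Q * X) (Q * Z + V) (0\<^sub>m 0 k) (0\<^sub>m 0 (m - k)) $$ (i, j)
        = augment_mat k m (Q * X) (\<lambda>j. Q *\<^sub>v col Z j + W j) $$ (i, j)"
      by (cases "j < k") (auto simp: augment_mat_def V_def)
  qed (use Q X Z V \<open>k \<le> m\<close> in \<open>auto simp: augment_mat_def\<close>)
  finally show ?thesis .
qed

lemma det_augment_mat_change_lift:
  assumes pres: "kernel_presentation \<rho> Q k m" and X: "X \<in> carrier_mat k k" and "k \<le> m"
    and W: "\<And>j. j < m - k \<Longrightarrow> W j \<in> carrier_vec m \<and> W' j \<in> carrier_vec m \<and> \<rho> (W j) = \<rho> (W' j)"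
  shows "det (augment_mat k m (Q * X) W') = det X * det (augment_mat k m Q W)"
proof -
  note Q = kernel_presentationD(1)[OF pres]
  have "\<forall>j. \<exists>z. j < m - k \<longrightarrow> z \<in> carrier_vec k \<and> W' j = Q *\<^sub>v z + W j"
    by (meson W kernel_presentation_same_valueE[OF pres])
  then obtain z where z: "\<And>j. j < m - k \<Longrightarrow> z j \<in> carrier_vec k \<and> W' j = Q *\<^sub>v z j + W j"
    by metis
  define Z where "Z = mat k (m - k) (\<lambda>(i, j). z j $ i)"
  have Z: "Z \<in> carrier_mat k (m - k)" by (simp add: Z_def)
  \<comment> \<open>\<open>W' = W + Q Z\<close> columnwise, hence \<open>[Q X | W'] = [Q | W] E\<close>\<close>
  define E where "E = four_block_mat X Z (0\<^sub>m (m - k) k) (1\<^sub>m (m - k))"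
  have "col Z j = z j" if "j < m - k" for j
    using z[OF that] that by (intro eq_vecI) (auto simp: Z_def)
  then have "augment_mat k m (Q * X) W' = augment_mat k m (Q * X) (\<lambda>j. Q *\<^sub>v col Z j + W j)"
    using z by (intro augment_mat_cong) auto
  also have "\<dots> = augment_mat k m Q W * E"
    unfolding E_def using augment_mat_mult_four_block_mat[OF Q X Z] W \<open>k \<le> m\<close> by simp
  also have "det \<dots> = det (augment_mat k m Q W) * det E"
    using X Z \<open>k \<le> m\<close> by (intro det_mult[of _ m]) (auto simp: E_def)
  also have "det E = det X"
    unfolding E_def by (rule det_four_block_mat_lower_left_zero_one[OF X Z])
  finally show ?thesis by simp
qed

lemma det_augmented_lift_independent:
  assumes "kernel_presentation \<pi> P a b" and "b = a + d"
    and "is_lift \<pi> b d u U" and "is_lift \<pi> b d u V"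
  shows "det_augmented P a b U = det_augmented P a b V"
proof -
  have "P * 1\<^sub>m a = P" using kernel_presentationD(1)[OF assms(1)] by simp
  moreover have "det (augment_mat a b (P * 1\<^sub>m a) V) = det (1\<^sub>m a) * det (augment_mat a b P U)"
    using assms by (intro det_augment_mat_change_lift[where \<rho> = \<pi>]) (auto simp: is_lift_def)
  ultimately show ?thesis by (simp add: det_augmented_eq_det_augment_mat)
qed

section \<open>Stabilization and the exchange matrix\<close>

lemma vec_last_append: "y \<in> carrier_vec n \<Longrightarrow> vec_last (x @\<^sub>v y) n = y"
  by (intro eq_vecI) (auto simp: vec_last_def)

definition stabilize_mat :: "nat \<Rightarrow> 'a::zero_neq_one mat \<Rightarrow> 'a mat"
  where "stabilize_mat c Q = four_block_mat (1\<^sub>m c) (0\<^sub>m c (dim_col Q)) (0\<^sub>m (dim_row Q) c) Q"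

lemma stabilize_mat_carrier: "Q \<in> carrier_mat m k \<Longrightarrow> stabilize_mat c Q \<in> carrier_mat (c + m) (c + k)"
  by (auto simp: stabilize_mat_def)

lemma stabilize_mat_mult_vec:
  fixes Q :: "'r::comm_ring_1 mat"
  assumes Q: "Q \<in> carrier_mat m k" and x: "x \<in> carrier_vec c" and y: "y \<in> carrier_vec k"
  shows "stabilize_mat c Q *\<^sub>v (x @\<^sub>v y) = x @\<^sub>v (Q *\<^sub>v y)"
proof -
  have "stabilize_mat c Q = four_block_mat (1\<^sub>m c) (0\<^sub>m c k) (0\<^sub>m m c) Q"
    using Q by (simp add: stabilize_mat_def)
  then have "stabilize_mat c Q *\<^sub>v (x @\<^sub>v y) = (1\<^sub>m c *\<^sub>v x + 0\<^sub>m c k *\<^sub>v y) @\<^sub>v (0\<^sub>m m c *\<^sub>v x + Q *\<^sub>v y)"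
    using four_block_mat_mult_vec[OF one_carrier_mat zero_carrier_mat zero_carrier_mat Q x y] by simp
  also have "\<dots> = x @\<^sub>v (Q *\<^sub>v y)"
    using Q x y by (intro arg_cong2[where f = "(@\<^sub>v)"] eq_vecI) auto
  finally show ?thesis .
qed

lemma stabilize_mat_mult_vec_split:
  fixes Q :: "'r::comm_ring_1 mat"
  assumes "Q \<in> carrier_mat m k" and "v \<in> carrier_vec (c + k)"
  shows "stabilize_mat c Q *\<^sub>v v = vec_first v c @\<^sub>v (Q *\<^sub>v vec_last v k)"
  using stabilize_mat_mult_vec[OF assms(1) vec_first_carrier vec_last_carrier] vec_first_last_append[OF assms(2)]
  by metis

lemma vec_last_add:
  "v \<in> carrier_vec (c + m) \<Longrightarrow> w \<in> carrier_vec (c + m) \<Longrightarrow> vec_last (v + w) m = vec_last v m + vec_last w m"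
  by (intro eq_vecI) (auto simp: vec_last_def)

lemma kernel_presentation_stabilize:
  assumes pres: "kernel_presentation \<rho> Q k m"
  shows "kernel_presentation (\<lambda>v. \<rho> (vec_last v m)) (stabilize_mat c Q) (c + k) (c + m)"
proof -
  note Q = kernel_presentationD(1)[OF pres]
  note split = vec_first_last_append[symmetric] and mult = stabilize_mat_mult_vec_split[OF Q]
  have zero_split: "0\<^sub>v (n + n') = 0\<^sub>v n @\<^sub>v (0\<^sub>v n' :: 'a vec)" for n n'
    by auto
  have "v = 0\<^sub>v (c + k)" if v: "v \<in> carrier_vec (c + k)" and "stabilize_mat c Q *\<^sub>v v = 0\<^sub>v (c + m)" for v
  proof -
    from that zero_split have "vec_first v c = 0\<^sub>v c" "Q *\<^sub>v vec_last v k = 0\<^sub>v m"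
      using mult[OF v] append_vec_eq[of "vec_first v c" c "0\<^sub>v c"] by auto
    then have "vec_first v c = 0\<^sub>v c" "vec_last v k = 0\<^sub>v k"
      using kernel_presentationD(2)[OF pres] by auto
    then show ?thesis using split[OF v] zero_split by metis
  qed
  moreover have "\<rho> (vec_last (v + w) m) = \<rho> (vec_last v m) + \<rho> (vec_last w m)"
    if "v \<in> carrier_vec (c + m)" "w \<in> carrier_vec (c + m)" for v w
    using that kernel_presentationD(3)[OF pres] by (simp add: vec_last_add)
  moreover have "{v \<in> carrier_vec (c + m). \<rho> (vec_last v m) = 0}
      = (\<lambda>x. stabilize_mat c Q *\<^sub>v x) ` carrier_vec (c + k)"
  proof (intro equalityI subsetI)
    fix v assume "v \<in> {v \<in> carrier_vec (c + m). \<rho> (vec_last v m) = 0}"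
    then have v: "v \<in> carrier_vec (c + m)" and "\<rho> (vec_last v m) = 0" by auto
    then obtain y where y: "y \<in> carrier_vec k" "vec_last v m = Q *\<^sub>v y"
      using kernel_presentationD(4)[OF pres] vec_last_carrier by blast
    have "v = vec_first v c @\<^sub>v (Q *\<^sub>v y)" using split[OF v] y by metis
    also have "\<dots> = stabilize_mat c Q *\<^sub>v (vec_first v c @\<^sub>v y)"
      using stabilize_mat_mult_vec[OF Q vec_first_carrier y(1)] by simp
    finally show "v \<in> (\<lambda>x. stabilize_mat c Q *\<^sub>v x) ` carrier_vec (c + k)"
      using y(1) by force
  next
    fix v assume "v \<in> (\<lambda>x. stabilize_mat c Q *\<^sub>v x) ` carrier_vec (c + k)"
    then obtain x where x: "x \<in> carrier_vec (c + k)" "v = stabilize_mat c Q *\<^sub>v x" by auto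
    then have "v = vec_first x c @\<^sub>v (Q *\<^sub>v vec_last x k)" using mult by simp
    then show "v \<in> {v \<in> carrier_vec (c + m). \<rho> (vec_last v m) = 0}"
      using Q kernel_presentationD(5)[OF pres] by (auto simp: vec_last_append)
  qed
  ultimately show ?thesis
    using stabilize_mat_carrier[OF Q] unfolding kernel_presentation_def by blast
qed

lemma det_augment_mat_stabilize:
  fixes Q :: "'r::comm_ring_1 mat"
  assumes Q: "Q \<in> carrier_mat m k" and "k \<le> m" and W: "\<And>j. j < m - k \<Longrightarrow> W j \<in> carrier_vec m"
  shows "det (augment_mat (c + k) (c + m) (stabilize_mat c Q) (\<lambda>j. 0\<^sub>v c @\<^sub>v W j))
       = det (augment_mat k m Q W)"
proof -
  have "augment_mat (c + k) (c + m) (stabilize_mat c Q) (\<lambda>j. 0\<^sub>v c @\<^sub>v W j)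
      = four_block_mat (1\<^sub>m c) (0\<^sub>m c m) (0\<^sub>m m c) (augment_mat k m Q W)"
  proof (rule eq_matI)
    fix i j assume "i < dim_row (four_block_mat (1\<^sub>m c) (0\<^sub>m c m) (0\<^sub>m m c) (augment_mat k m Q W))"
      and "j < dim_col (four_block_mat (1\<^sub>m c) (0\<^sub>m c m) (0\<^sub>m m c) (augment_mat k m Q W))"
    then have "i < c + m" "j < c + m" by auto
    then have "\<not> j < c + k \<Longrightarrow> W (j - (c + k)) \<in> carrier_vec m" by (intro W) arith
    with Q \<open>i < c + m\<close> \<open>j < c + m\<close>
    show "augment_mat (c + k) (c + m) (stabilize_mat c Q) (\<lambda>j. 0\<^sub>v c @\<^sub>v W j) $$ (i, j)
        = four_block_mat (1\<^sub>m c) (0\<^sub>m c m) (0\<^sub>m m c) (augment_mat k m Q W) $$ (i, j)"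
      by (cases "j < c + k") (auto simp: augment_mat_def stabilize_mat_def)
  qed auto
  also have "det \<dots> = det (augment_mat k m Q W)"
    by (rule det_four_block_mat_one_lower_left_zero) auto
  finally show ?thesis .
qed

lemma is_lift_stabilize:
  "is_lift \<pi> b d u U \<Longrightarrow> is_lift (\<lambda>v. \<pi> (vec_last v b)) (c + b) d u (\<lambda>j. 0\<^sub>v c @\<^sub>v U j)"
  by (auto simp: is_lift_def vec_last_append)

lemma det_augmented_stabilize:
  fixes P :: "'r::comm_ring_1 mat"
  assumes "P \<in> carrier_mat b a" and "b = a + d" and "is_lift \<pi> b d u U"
  shows "det (augment_mat (c + a) (c + b) (stabilize_mat c P) (\<lambda>j. 0\<^sub>v c @\<^sub>v U j)) = det_augmented P a b U"
  unfolding det_augmented_eq_det_augment_mat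
  by (rule det_augment_mat_stabilize) (use assms in \<open>auto simp: is_lift_def\<close>)

text \<open>
  Whitehead's trick from the proof of Schanuel's lemma: the map
  (x, y) |-> (y - B x, x - A B x + A y) from R^b + R^b' to R^b' + R^b.
\<close>

definition exchange_mat :: "'a::comm_ring_1 mat \<Rightarrow> 'a mat \<Rightarrow> 'a mat"
  where "exchange_mat A B = four_block_mat (- B) (1\<^sub>m (dim_col A)) (1\<^sub>m (dim_row A) - A * B) A"

lemma exchange_mat_eq:
  "A \<in> carrier_mat b b' \<Longrightarrow> exchange_mat A B = four_block_mat (- B) (1\<^sub>m b') (1\<^sub>m b - A * B) A"
  by (simp add: exchange_mat_def)

lemma exchange_mat_carrier:
  "A \<in> carrier_mat b b' \<Longrightarrow> B \<in> carrier_mat b' b \<Longrightarrow> exchange_mat A B \<in> carrier_mat (b' + b) (b + b')"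
  by (auto simp: exchange_mat_def)

lemma exchange_mat_inverse:
  fixes A B :: "'r::comm_ring_1 mat"
  assumes A: "A \<in> carrier_mat b b'" and B: "B \<in> carrier_mat b' b"
  shows "exchange_mat A B * exchange_mat B A = 1\<^sub>m (b' + b)"
proof -
  have "- B * - A + 1\<^sub>m b' * (1\<^sub>m b' - B * A) = 1\<^sub>m b'"
    and "- B * 1\<^sub>m b + 1\<^sub>m b' * B = 0\<^sub>m b' b"
    and "(1\<^sub>m b - A * B) * 1\<^sub>m b + A * B = 1\<^sub>m b"
    using A B by (simp; intro eq_matI; auto)+
  moreover have "(1\<^sub>m b - A * B) * - A + A * (1\<^sub>m b' - B * A) = 0\<^sub>m b b'"
  proof -
    have "(1\<^sub>m b - A * B) * - A = - A + A * (B * A)"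
      using A B by (subst minus_mult_distrib_mat[of _ b b]) (auto simp: assoc_mult_mat[of A b b' B b])
    moreover have "A * (1\<^sub>m b' - B * A) = A - A * (B * A)"
      using A B by (subst mult_minus_distrib_mat[of _ b b']) auto
    ultimately show ?thesis
      using A B by (intro eq_matI) auto
  qed
  moreover have "exchange_mat A B * exchange_mat B A
      = four_block_mat (- B * - A + 1\<^sub>m b' * (1\<^sub>m b' - B * A)) (- B * 1\<^sub>m b + 1\<^sub>m b' * B)
          ((1\<^sub>m b - A * B) * - A + A * (1\<^sub>m b' - B * A)) ((1\<^sub>m b - A * B) * 1\<^sub>m b + A * B)"
    unfolding exchange_mat_eq[OF A] exchange_mat_eq[OF B] by (rule mult_four_block_mat) (use A B in auto)
  ultimately show ?thesis by simp
qed

lemma additive_on_carrier_diff: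
  fixes \<pi> :: "'a::ab_group_add vec \<Rightarrow> 'm::ab_group_add"
  assumes additive: "\<And>v w. v \<in> carrier_vec n \<Longrightarrow> w \<in> carrier_vec n \<Longrightarrow> \<pi> (v + w) = \<pi> v + \<pi> w"
    and "v \<in> carrier_vec n" "w \<in> carrier_vec n"
  shows "\<pi> (v - w) = \<pi> v - \<pi> w"
proof -
  have "v = (v - w) + w" using assms(2,3) by auto
  then have "\<pi> v = \<pi> (v - w) + \<pi> w" using additive[of "v - w" w] assms(2,3) by simp
  then show ?thesis by (simp add: algebra_simps)
qed

lemma exchange_mat_compat:
  fixes A B :: "'r::comm_ring_1 mat" and \<pi> :: "'r vec \<Rightarrow> 'm::ab_group_add"
  assumes A: "A \<in> carrier_mat b b'" and B: "B \<in> carrier_mat b' b"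
    and lift_A: "\<And>y. y \<in> carrier_vec b' \<Longrightarrow> \<pi> (A *\<^sub>v y) = \<pi>' y"
    and lift_B: "\<And>x. x \<in> carrier_vec b \<Longrightarrow> \<pi>' (B *\<^sub>v x) = \<pi> x"
    and additive: "\<And>v w. v \<in> carrier_vec b \<Longrightarrow> w \<in> carrier_vec b \<Longrightarrow> \<pi> (v + w) = \<pi> v + \<pi> w"
    and w: "w \<in> carrier_vec (b + b')"
  shows "\<pi> (vec_last (exchange_mat A B *\<^sub>v w) b) = \<pi>' (vec_last w b')"
proof -
  define x y where "x = vec_first w b" and "y = vec_last w b'"
  have x: "x \<in> carrier_vec b" and y: "y \<in> carrier_vec b'" by (auto simp: x_def y_def)
  have "exchange_mat A B *\<^sub>v w = (- B *\<^sub>v x + 1\<^sub>m b' *\<^sub>v y) @\<^sub>v ((1\<^sub>m b - A * B) *\<^sub>v x + A *\<^sub>v y)"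
  proof -
    have "w = x @\<^sub>v y" using w by (simp add: x_def y_def)
    then show ?thesis
      unfolding exchange_mat_eq[OF A] by (simp only:) (rule four_block_mat_mult_vec; use A B x y in auto)
  qed
  also have "(1\<^sub>m b - A * B) *\<^sub>v x = x - A *\<^sub>v (B *\<^sub>v x)"
    using A B x by (subst minus_mult_distrib_mat_vec[of _ b b]) (auto simp: assoc_mult_mat_vec[of A b b' B b])
  finally have "vec_last (exchange_mat A B *\<^sub>v w) b = (x - A *\<^sub>v (B *\<^sub>v x)) + A *\<^sub>v y"
    using A B x y by (simp add: vec_last_append)
  also have "\<pi> \<dots> = \<pi> x - \<pi> (A *\<^sub>v (B *\<^sub>v x)) + \<pi> (A *\<^sub>v y)"
    using A B x y by (simp add: additive additive_on_carrier_diff[OF additive])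
  also have "\<dots> = \<pi>' y"
    using A B x y lift_A lift_B by simp
  finally show ?thesis by (simp add: y_def)
qed

section \<open>Comparing two presentations\<close>

lemma kernel_presentation_mult_invertible:
  fixes S T :: "'r::comm_ring_1 mat"
  assumes pres: "kernel_presentation \<rho>' Q k m"
    and S: "S \<in> carrier_mat m m" and T: "T \<in> carrier_mat m m"
    and ST: "S * T = 1\<^sub>m m" and TS: "T * S = 1\<^sub>m m"
    and compat: "\<And>w. w \<in> carrier_vec m \<Longrightarrow> \<rho> (S *\<^sub>v w) = \<rho>' w"
  shows "kernel_presentation \<rho> (S * Q) k m"
proof -
  note Q = kernel_presentationD(1)[OF pres]
  have ST_v: "S *\<^sub>v (T *\<^sub>v v) = v" and TS_v: "T *\<^sub>v (S *\<^sub>v v) = v" if "v \<in> carrier_vec m" for v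
    using that S T ST TS by (simp_all flip: assoc_mult_mat_vec)
  have \<rho>_via_T: "\<rho> v = \<rho>' (T *\<^sub>v v)" if "v \<in> carrier_vec m" for v
    using compat[of "T *\<^sub>v v"] ST_v[OF that] T that by simp
  have "x = 0\<^sub>v k" if x: "x \<in> carrier_vec k" and "(S * Q) *\<^sub>v x = 0\<^sub>v m" for x
  proof -
    have "Q *\<^sub>v x = T *\<^sub>v ((S * Q) *\<^sub>v x)"
      using TS_v[of "Q *\<^sub>v x"] S Q x by simp
    also have "\<dots> = 0\<^sub>v m" using that T by auto
    finally show ?thesis using kernel_presentationD(2)[OF pres x] by simp
  qed
  moreover have "\<rho> (v + w) = \<rho> v + \<rho> w" if "v \<in> carrier_vec m" "w \<in> carrier_vec m" for v w
    using that T kernel_presentationD(3)[OF pres, of "T *\<^sub>v v" "T *\<^sub>v w"]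
    by (simp add: \<rho>_via_T mult_add_distrib_mat_vec)
  moreover have "{v \<in> carrier_vec m. \<rho> v = 0} = (\<lambda>x. (S * Q) *\<^sub>v x) ` carrier_vec k"
  proof (intro equalityI subsetI)
    fix v assume "v \<in> {v \<in> carrier_vec m. \<rho> v = 0}"
    then have v: "v \<in> carrier_vec m" and "\<rho>' (T *\<^sub>v v) = 0" by (auto simp: \<rho>_via_T)
    then obtain x where x: "x \<in> carrier_vec k" "T *\<^sub>v v = Q *\<^sub>v x"
      using kernel_presentationD(4)[OF pres, of "T *\<^sub>v v"] T by auto
    then have "v = (S * Q) *\<^sub>v x"
      using ST_v[OF v] S Q by simp
    with x(1) show "v \<in> (\<lambda>x. (S * Q) *\<^sub>v x) ` carrier_vec k" by blast
  next
    fix v assume "v \<in> (\<lambda>x. (S * Q) *\<^sub>v x) ` carrier_vec k"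
    then obtain x where x: "x \<in> carrier_vec k" and v: "v = S *\<^sub>v (Q *\<^sub>v x)"
      using S Q by auto
    then show "v \<in> {v \<in> carrier_vec m. \<rho> v = 0}"
      using S Q compat kernel_presentationD(5)[OF pres] by simp
  qed
  ultimately show ?thesis
    using S Q unfolding kernel_presentation_def by auto
qed

lemma kernel_presentation_factor:
  fixes Q' :: "'r::comm_ring_1 mat"
  assumes pres: "kernel_presentation \<rho> Q k m" and Q': "Q' \<in> carrier_mat m k'"
    and image: "\<And>x. x \<in> carrier_vec k' \<Longrightarrow> \<rho> (Q' *\<^sub>v x) = 0"
  shows "\<exists>X\<in>carrier_mat k k'. Q' = Q * X"
proof -
  note Q = kernel_presentationD(1)[OF pres]
  have "\<exists>x. x \<in> carrier_vec k \<and> col Q' j = Q *\<^sub>v x" if "j < k'" for j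
  proof -
    have "col Q' j = Q' *\<^sub>v unit_vec k' j"
      using Q' that by (intro eq_vecI) auto
    then have "\<rho> (col Q' j) = 0" using image[of "unit_vec k' j"] by simp
    then show ?thesis using kernel_presentationD(4)[OF pres, of "col Q' j"] Q' that by auto
  qed
  then obtain x where x: "\<And>j. j < k' \<Longrightarrow> x j \<in> carrier_vec k \<and> col Q' j = Q *\<^sub>v x j"
    by metis
  define X where "X = mat k k' (\<lambda>(i, j). x j $ i)"
  have "col X j = x j" if "j < k'" for j
    using x[OF that] that by (intro eq_vecI) (auto simp: X_def)
  then have "Q' = Q * X"
    using Q Q' x by (intro mat_col_eqI) (auto simp: X_def)
  then show ?thesis by (auto simp: X_def)
qed

lemma kernel_presentation_mult_left_cancel:
  fixes M N :: "'r::comm_ring_1 mat"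
  assumes pres: "kernel_presentation \<rho> Q k m"
    and M: "M \<in> carrier_mat k l" and N: "N \<in> carrier_mat k l" and "Q * M = Q * N"
  shows "M = N"
proof (rule mat_col_eqI)
  note Q = kernel_presentationD(1)[OF pres]
  fix j assume "j < dim_col N"
  then have j: "j < l" using N by simp
  have "Q *\<^sub>v (col M j - col N j) = col (Q * M) j - col (Q * N) j"
    using Q M N j by (simp add: mult_minus_distrib_mat_vec)
  also have "\<dots> = 0\<^sub>v m"
    using \<open>Q * M = Q * N\<close> Q N j by auto
  finally have "Q *\<^sub>v (col M j - col N j) = 0\<^sub>v m" .
  moreover have "col M j - col N j \<in> carrier_vec k"
    using M N j by (intro minus_carrier_vec) auto
  ultimately have diff: "col M j - col N j = 0\<^sub>v k"
    using kernel_presentationD(2)[OF pres] by blast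
  show "col M j = col N j"
  proof (rule eq_vecI)
    fix i assume "i < dim_vec (col N j)"
    then have "(col M j - col N j) $ i = 0" using diff N by simp
    then show "col M j $ i = col N j $ i" using \<open>i < dim_vec (col N j)\<close> M N by simp
  qed (use M N in simp)
qed (use M N in auto)

lemma kernel_presentations_unit_det:
  fixes Q Q' :: "'r::comm_ring_1 mat"
  assumes pres: "kernel_presentation \<rho> Q k m" and pres': "kernel_presentation \<rho> Q' k m"
  shows "\<exists>X\<in>carrier_mat k k. Q' = Q * X \<and> det X dvd 1"
proof -
  note Q = kernel_presentationD(1)[OF pres] and Q' = kernel_presentationD(1)[OF pres']
  obtain X where X: "X \<in> carrier_mat k k" "Q' = Q * X"
    using kernel_presentation_factor[OF pres Q' kernel_presentationD(5)[OF pres']] by blast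
  obtain Y where Y: "Y \<in> carrier_mat k k" "Q = Q' * Y"
    using kernel_presentation_factor[OF pres' Q kernel_presentationD(5)[OF pres]] by blast
  have "Q * (X * Y) = Q * X * Y"
    using assoc_mult_mat[OF Q X(1) Y(1)] by simp
  also have "\<dots> = Q' * Y" by (simp only: X(2))
  also have "\<dots> = Q" by (rule Y(2)[symmetric])
  also have "\<dots> = Q * 1\<^sub>m k" using Q by simp
  finally have "X * Y = 1\<^sub>m k"
    by (rule kernel_presentation_mult_left_cancel[OF pres mult_carrier_mat[OF X(1) Y(1)] one_carrier_mat])
  moreover have "det (X * Y) = det X * det Y" by (rule det_mult[OF X(1) Y(1)])
  ultimately have "1 = det X * det Y" by simp
  then show ?thesis using X by (blast intro: dvdI)
qed

lemma det_augment_mat_compare: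
  fixes Q Q' S T :: "'r::comm_ring_1 mat"
  assumes pres: "kernel_presentation \<rho> Q k m" and pres': "kernel_presentation \<rho>' Q' k m" and "k \<le> m"
    and S: "S \<in> carrier_mat m m" and T: "T \<in> carrier_mat m m"
    and ST: "S * T = 1\<^sub>m m" and TS: "T * S = 1\<^sub>m m"
    and compat: "\<And>w. w \<in> carrier_vec m \<Longrightarrow> \<rho> (S *\<^sub>v w) = \<rho>' w"
  shows "\<exists>c. c dvd 1 \<and> (\<forall>u W W'. is_lift \<rho> m (m - k) u W \<longrightarrow> is_lift \<rho>' m (m - k) u W' \<longrightarrow>
            det (augment_mat k m Q' W') = c * det (augment_mat k m Q W))"
proof -
  note Q' = kernel_presentationD(1)[OF pres']
  obtain X where X: "X \<in> carrier_mat k k" "S * Q' = Q * X" and "det X dvd 1"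
    using kernel_presentations_unit_det[OF pres kernel_presentation_mult_invertible[OF pres' S T ST TS compat]]
    by blast
  have "det T * det S = 1"
    using det_mult[OF T S] TS by simp
  then have "det T dvd 1" by (metis dvdI)
  then have "det T * det X dvd 1"
    using mult_dvd_mono[OF _ \<open>det X dvd 1\<close>] by fastforce
  moreover have "det (augment_mat k m Q' W') = (det T * det X) * det (augment_mat k m Q W)"
    if "is_lift \<rho> m (m - k) u W" and "is_lift \<rho>' m (m - k) u W'" for u W W'
  proof -
    have W: "W j \<in> carrier_vec m" "W' j \<in> carrier_vec m" "\<rho> (W j) = \<rho>' (W' j)" if "j < m - k" for j
      using that \<open>is_lift \<rho> m (m - k) u W\<close> \<open>is_lift \<rho>' m (m - k) u W'\<close> by (auto simp: is_lift_def)
    have "det S * det (augment_mat k m Q' W') = det (S * augment_mat k m Q' W')"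
      using S by (simp add: det_mult)
    also have "S * augment_mat k m Q' W' = augment_mat k m (Q * X) (\<lambda>j. S *\<^sub>v W' j)"
      using W by (simp add: mult_augment_mat[OF S Q'] X(2))
    also have "det (augment_mat k m (Q * X) (\<lambda>j. S *\<^sub>v W' j)) = det X * det (augment_mat k m Q W)"
      using W S compat by (intro det_augment_mat_change_lift[OF pres X(1) \<open>k \<le> m\<close>]) auto
    finally have key: "det S * det (augment_mat k m Q' W') = det X * det (augment_mat k m Q W)" .
    have "det (augment_mat k m Q' W') = (det T * det S) * det (augment_mat k m Q' W')"
      using \<open>det T * det S = 1\<close> by simp
    also have "\<dots> = det T * (det X * det (augment_mat k m Q W))"
      by (simp only: mult.assoc key)
    finally show ?thesis by (simp only: mult.assoc)
  qed
  ultimately show ?thesis by blast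
qed

lemma vec_semilinear_eqI:
  fixes f g :: "'r::comm_ring_1 vec \<Rightarrow> 'm::ab_group_add"
  assumes f_add: "\<And>v w. v \<in> carrier_vec n \<Longrightarrow> w \<in> carrier_vec n \<Longrightarrow> f (v + w) = f v + f w"
    and g_add: "\<And>v w. v \<in> carrier_vec n \<Longrightarrow> w \<in> carrier_vec n \<Longrightarrow> g (v + w) = g v + g w"
    and f_smult: "\<And>r v. v \<in> carrier_vec n \<Longrightarrow> f (r \<cdot>\<^sub>v v) = s r (f v)"
    and g_smult: "\<And>r v. v \<in> carrier_vec n \<Longrightarrow> g (r \<cdot>\<^sub>v v) = s r (g v)"
    and units: "\<And>i. i < n \<Longrightarrow> f (unit_vec n i) = g (unit_vec n i)"
    and v: "v \<in> carrier_vec n"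
  shows "f v = g v"
proof -
  define trunc where "trunc l = vec n (\<lambda>i. if i < l then v $ i else 0)" for l
  have trunc: "trunc l \<in> carrier_vec n" for l by (simp add: trunc_def)
  have "f (trunc l) = g (trunc l)" for l
  proof (induction l)
    case 0
    have "trunc 0 = 0\<^sub>v n" by (auto simp: trunc_def)
    moreover have "f (0\<^sub>v n) = 0" "g (0\<^sub>v n) = 0"
      using f_add[of "0\<^sub>v n" "0\<^sub>v n"] g_add[of "0\<^sub>v n" "0\<^sub>v n"] by simp_all
    ultimately show ?case by simp
  next
    case (Suc l)
    show ?case
    proof (cases "l < n")
      case True
      have "trunc (Suc l) = trunc l + (v $ l) \<cdot>\<^sub>v unit_vec n l"
        using True v by (auto simp: trunc_def less_Suc_eq)
      then show ?thesis
        using Suc.IH trunc True f_add g_add f_smult g_smult units by simp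
    next
      case False
      then have "trunc (Suc l) = trunc l" by (auto simp: trunc_def)
      with Suc.IH show ?thesis by simp
    qed
  qed
  moreover have "trunc n = v" using v by (auto simp: trunc_def)
  ultimately show ?thesis by metis
qed

lemma injective_presentationD:
  assumes "injective_presentation sN P a b \<pi>"
  shows "kernel_presentation \<pi> P a b"
    and "\<pi> ` carrier_vec b = UNIV"
    and "\<And>v w. v \<in> carrier_vec b \<Longrightarrow> w \<in> carrier_vec b \<Longrightarrow> \<pi> (v + w) = \<pi> v + \<pi> w"
    and "\<And>r v. v \<in> carrier_vec b \<Longrightarrow> \<pi> (r \<cdot>\<^sub>v v) = sN r (\<pi> v)"
  using assms unfolding injective_presentation_def kernel_presentation_def by blast+

lemma mult_mat_vec_smult:
  fixes A :: "'r::comm_ring_1 mat"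
  assumes "A \<in> carrier_mat nr nc" and "v \<in> carrier_vec nc"
  shows "A *\<^sub>v (r \<cdot>\<^sub>v v) = r \<cdot>\<^sub>v (A *\<^sub>v v)"
  using assms by (intro eq_vecI) auto

lemma exists_lift_mat:
  fixes \<pi> \<pi>' :: "'r::comm_ring_1 vec \<Rightarrow> 'm::ab_group_add"
  assumes pres: "injective_presentation sN P a b \<pi>" and pres': "injective_presentation sN P' a' b' \<pi>'"
  shows "\<exists>A\<in>carrier_mat b b'. \<forall>y\<in>carrier_vec b'. \<pi> (A *\<^sub>v y) = \<pi>' y"
proof -
  have "\<exists>v. v \<in> carrier_vec b \<and> \<pi> v = \<pi>' (unit_vec b' j)" for j
    using injective_presentationD(2)[OF pres] by (metis UNIV_I imageE)
  then obtain col_A where col_A: "\<And>j. col_A j \<in> carrier_vec b \<and> \<pi> (col_A j) = \<pi>' (unit_vec b' j)"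
    by metis
  define A where "A = mat b b' (\<lambda>(i, j). col_A j $ i)"
  have A: "A \<in> carrier_mat b b'" by (simp add: A_def)
  have "\<pi> (A *\<^sub>v y) = \<pi>' y" if "y \<in> carrier_vec b'" for y
  proof (rule vec_semilinear_eqI[where s = sN, OF _ injective_presentationD(3)[OF pres']
        _ injective_presentationD(4)[OF pres'] _ that])
    show "\<pi> (A *\<^sub>v (v + w)) = \<pi> (A *\<^sub>v v) + \<pi> (A *\<^sub>v w)" if "v \<in> carrier_vec b'" "w \<in> carrier_vec b'" for v w
      using that A injective_presentationD(3)[OF pres] by (simp add: mult_add_distrib_mat_vec)
    show "\<pi> (A *\<^sub>v (r \<cdot>\<^sub>v v)) = sN r (\<pi> (A *\<^sub>v v))" if "v \<in> carrier_vec b'" for r v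
      using that A injective_presentationD(4)[OF pres] by (simp add: mult_mat_vec_smult[OF A that])
    show "\<pi> (A *\<^sub>v unit_vec b' j) = \<pi>' (unit_vec b' j)" if "j < b'" for j
    proof -
      have "A *\<^sub>v unit_vec b' j = col_A j"
        using col_A[of j] that by (intro eq_vecI) (auto simp: A_def)
      then show ?thesis using col_A by simp
    qed
  qed
  with A show ?thesis by blast
qed

lemma det_augment_mat_stabilized_unit_multiple:
  fixes P P' :: "'r::comm_ring_1 mat" and \<pi> \<pi>' :: "'r vec \<Rightarrow> 'm::ab_group_add"
  assumes pres: "injective_presentation sN P a b \<pi>" and pres': "injective_presentation sN P' a' b' \<pi>'"
    and "b + a' = b' + a" and "a \<le> b"
  defines "m \<equiv> b' + b" and "k \<equiv> b' + a"
  shows "\<exists>c. c dvd 1 \<and> (\<forall>u W W'. is_lift (\<lambda>v. \<pi> (vec_last v b)) m (m - k) u W \<longrightarrow>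
            is_lift (\<lambda>v. \<pi>' (vec_last v b')) m (m - k) u W' \<longrightarrow>
            det (augment_mat k m (stabilize_mat b P') W') = c * det (augment_mat k m (stabilize_mat b' P) W))"
proof -
  obtain A where A: "A \<in> carrier_mat b b'" "\<And>y. y \<in> carrier_vec b' \<Longrightarrow> \<pi> (A *\<^sub>v y) = \<pi>' y"
    using exists_lift_mat[OF pres pres'] by blast
  obtain B where B: "B \<in> carrier_mat b' b" "\<And>x. x \<in> carrier_vec b \<Longrightarrow> \<pi>' (B *\<^sub>v x) = \<pi> x"
    using exists_lift_mat[OF pres' pres] by blast
  have dims: "b + b' = m" "b + a' = k" "k \<le> m"
    using assms(3,4) by (auto simp: m_def k_def)
  have stab: "kernel_presentation (\<lambda>v. \<pi> (vec_last v b)) (stabilize_mat b' P) k m"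
    unfolding m_def k_def by (rule kernel_presentation_stabilize[OF injective_presentationD(1)[OF pres]])
  have stab': "kernel_presentation (\<lambda>v. \<pi>' (vec_last v b')) (stabilize_mat b P') k m"
    unfolding dims(1,2)[symmetric] by (rule kernel_presentation_stabilize[OF injective_presentationD(1)[OF pres']])
  have S: "exchange_mat A B \<in> carrier_mat m m" and T: "exchange_mat B A \<in> carrier_mat m m"
    using exchange_mat_carrier[OF A(1) B(1)] exchange_mat_carrier[OF B(1) A(1)] dims(1) by (auto simp: m_def)
  have ST: "exchange_mat A B * exchange_mat B A = 1\<^sub>m m"
    and TS: "exchange_mat B A * exchange_mat A B = 1\<^sub>m m"
    using exchange_mat_inverse[OF A(1) B(1)] exchange_mat_inverse[OF B(1) A(1)] dims(1) by (auto simp: m_def)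
  have compat: "\<pi> (vec_last (exchange_mat A B *\<^sub>v w) b) = \<pi>' (vec_last w b')"
    if "w \<in> carrier_vec m" for w
    using that dims(1)
    by (intro exchange_mat_compat[OF A(1) B(1) A(2) B(2) injective_presentationD(3)[OF pres]]) auto
  show ?thesis
    by (rule det_augment_mat_compare[OF stab stab' \<open>k \<le> m\<close> S T ST TS compat])
qed

lemma det_augmented_unit_multiple:
  fixes P P' :: "'r::comm_ring_1 mat" and \<pi> \<pi>' :: "'r vec \<Rightarrow> 'm::ab_group_add"
  assumes pres: "injective_presentation sN P a b \<pi>" and pres': "injective_presentation sN P' a' b' \<pi>'"
    and "b = a + d" and "b' = a' + d"
  shows "\<exists>c. c dvd 1 \<and> (\<forall>u U U'. is_lift \<pi> b d u U \<longrightarrow> is_lift \<pi>' b' d u U' \<longrightarrow>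
            det_augmented P' a' b' U' = c * det_augmented P a b U)"
proof -
  note P = kernel_presentationD(1)[OF injective_presentationD(1)[OF pres]]
    and P' = kernel_presentationD(1)[OF injective_presentationD(1)[OF pres']]
  define m k where "m = b' + b" and "k = b' + a"
  have dims: "b + b' = m" "b + a' = k" "b + a' = b' + a" "a \<le> b" "m - k = d"
    using assms(3,4) by (auto simp: m_def k_def)
  obtain c where "c dvd 1" and c: "\<And>u W W'. is_lift (\<lambda>v. \<pi> (vec_last v b)) m (m - k) u W \<Longrightarrow>
      is_lift (\<lambda>v. \<pi>' (vec_last v b')) m (m - k) u W' \<Longrightarrow>
      det (augment_mat k m (stabilize_mat b P') W') = c * det (augment_mat k m (stabilize_mat b' P) W)"
    using det_augment_mat_stabilized_unit_multiple[OF pres pres' dims(3,4)] unfolding m_def k_def by blast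
  have "det_augmented P' a' b' U' = c * det_augmented P a b U"
    if U: "is_lift \<pi> b d u U" and U': "is_lift \<pi>' b' d u U'" for u U U'
  proof -
    have "is_lift (\<lambda>v. \<pi> (vec_last v b)) m (m - k) u (\<lambda>j. 0\<^sub>v b' @\<^sub>v U j)"
      using is_lift_stabilize[OF U, of b'] by (simp only: m_def[symmetric] dims(5))
    moreover have "is_lift (\<lambda>v. \<pi>' (vec_last v b')) m (m - k) u (\<lambda>j. 0\<^sub>v b @\<^sub>v U' j)"
      using is_lift_stabilize[OF U', of b] by (simp only: dims(1,5))
    moreover have "det (augment_mat k m (stabilize_mat b' P) (\<lambda>j. 0\<^sub>v b' @\<^sub>v U j)) = det_augmented P a b U"
      using det_augmented_stabilize[OF P assms(3) U, of b'] by (simp only: m_def k_def)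
    moreover have "det (augment_mat k m (stabilize_mat b P') (\<lambda>j. 0\<^sub>v b @\<^sub>v U' j)) = det_augmented P' a' b' U'"
      using det_augmented_stabilize[OF P' assms(4) U', of b] by (simp only: dims(1,2))
    ultimately show ?thesis using c by metis
  qed
  with \<open>c dvd 1\<close> show ?thesis by blast
qed

lemma is_lift_some:
  assumes "\<pi> ` carrier_vec b = UNIV"
  shows "is_lift \<pi> b d u (SOME U. is_lift \<pi> b d u U)"
proof -
  have "\<forall>j. \<exists>v. v \<in> carrier_vec b \<and> \<pi> v = u j"
    using assms by (metis UNIV_I imageE)
  then have "\<exists>U. is_lift \<pi> b d u U"
    unfolding is_lift_def by metis
  then show ?thesis by (rule someI_ex)
qed

lemma alexander_fun_unit_multiple:
  fixes P P' :: "'r::comm_ring_1 mat" and \<pi> \<pi>' :: "'r vec \<Rightarrow> 'm::ab_group_add"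
  assumes pres: "injective_presentation sN P a b \<pi>" and pres': "injective_presentation sN P' a' b' \<pi>'"
    and "b = a + d" and "b' = a' + d"
  shows "\<exists>c. c dvd 1 \<and> (\<forall>u. alexander_fun P' \<pi>' a' b' d u = c * alexander_fun P \<pi> a b d u)"
proof -
  obtain c where "c dvd 1" and c: "\<And>u U U'. is_lift \<pi> b d u U \<Longrightarrow> is_lift \<pi>' b' d u U' \<Longrightarrow>
      det_augmented P' a' b' U' = c * det_augmented P a b U"
    using det_augmented_unit_multiple[OF assms] by blast
  have "alexander_fun P' \<pi>' a' b' d u = c * alexander_fun P \<pi> a b d u" for u
    unfolding alexander_fun_def
    by (rule c[OF is_lift_some[OF injective_presentationD(2)[OF pres]]
          is_lift_some[OF injective_presentationD(2)[OF pres']]])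
  with \<open>c dvd 1\<close> show ?thesis by blast
qed

theorem proposition10p3:
  fixes sN :: "'n::finite grpring \<Rightarrow> 'm::ab_group_add \<Rightarrow> 'm"
    and P P' :: "'n grpring mat"
    and \<pi> \<pi>' :: "'n grpring vec \<Rightarrow> 'm"
    and a b a' b' d :: nat
  assumes "Modules.module sN"
    and "injective_presentation sN P a b \<pi>"
    and "injective_presentation sN P' a' b' \<pi>'"
    and "b = a + d" and "b' = a' + d"
  shows "(\<forall>u U V. is_lift \<pi> b d u U \<longrightarrow> is_lift \<pi> b d u V \<longrightarrow>
             det_augmented P a b U = det_augmented P a b V)
       \<and> (\<forall>u U V. is_lift \<pi>' b' d u U \<longrightarrow> is_lift \<pi>' b' d u V \<longrightarrow>
             det_augmented P' a' b' U = det_augmented P' a' b' V)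
       \<and> (\<exists>\<epsilon>::int. \<exists>g::'n \<Rightarrow>\<^sub>0 int. (\<epsilon> = 1 \<or> \<epsilon> = -1) \<and>
            (\<forall>u. alexander_fun P' \<pi>' a' b' d u
                   = Poly_Mapping.single g \<epsilon> * alexander_fun P \<pi> a b d u))"
proof -
  obtain c where "c dvd 1" and c: "\<forall>u. alexander_fun P' \<pi>' a' b' d u = c * alexander_fun P \<pi> a b d u"
    using alexander_fun_unit_multiple[OF assms(2-5)] by blast
  obtain g \<epsilon> where "\<epsilon> = 1 \<or> \<epsilon> = -1" and "c = Poly_Mapping.single g \<epsilon>"
    using is_unit_grpring_eq_single[OF \<open>c dvd 1\<close>] by blast
  moreover note det_augmented_lift_independent[OF injective_presentationD(1)[OF assms(2)] assms(4)]
    det_augmented_lift_independent[OF injective_presentationD(1)[OF assms(3)] assms(5)]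
  ultimately show ?thesis using c by blast
qed

end
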